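(* Let $A(\chi)$ be the $n\times n$ matrix over the field of rational functions in indeterminates $\chi_1,\dots,\chi_n,\hbar,q_1,\dots,q_n$ with $A_{ii}=\chi_i$ and $A_{ij}=\frac{\hbar(1-q_i)(1+q_j)}{(1-q_i/q_j)(1-q_iq_j)}$ for $i\ne j$. For $\sigma\in\mathfrak S_n$ put $m_\sigma=A_{1\sigma(1)}\cdots A_{n\sigma(n)}$. Then $$\det A(\chi)=\sum_\sigma(-1)^{\ell(\sigma)}m_\sigma,$$ where the sum runs only over those permutations $\sigma$ all of whose nontrivial cycles have even length. Consequently $\det A(\chi)=(-1)^n\det A(-\chi)$, where $A(-\chi)$ denotes $A(\chi)$ with each $\chi_i$ replaced by $-\chi_i$.
   Context: $\ell(\sigma)$ denotes the number of inversions of $\sigma$, so $(-1)^{\ell(\sigma)}$ is its sign. *)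

theory Defs
  imports "HOL-Analysis.Analysis" "HOL-Combinatorics.Orbits"
begin

definition Amat :: "('n::finite \<Rightarrow> 'a::field) \<Rightarrow> 'a \<Rightarrow> ('n \<Rightarrow> 'a) \<Rightarrow> 'a^'n^'n" where
  "Amat chi hbar q = (\<chi> i j. if i = j then chi i
      else hbar * (1 - q i) * (1 + q j) / ((1 - q i / q j) * (1 - q i * q j)))"

definition all_cycles_even :: "('n \<Rightarrow> 'n) \<Rightarrow> bool" where
  "all_cycles_even p \<longleftrightarrow> (\<forall>i. p i \<noteq> i \<longrightarrow> even (card (orbit p i)))"

end

(*
  Off the diagonal, A i j = F i * G j * E i j with F i = hbar (1 - q i),
  G j = q j (1 + q j) and E antisymmetric.  Reversing one cycle of odd length
  at least 3 in a permutation keeps its sign, leaves the products of the F and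
  G factors along the cycle unchanged, and negates each of the odd number of
  E factors; so its term in the Leibniz expansion is negated.  Reversing the
  odd cycle through a canonically chosen point is an involution without fixed
  points on the permutations having such a cycle, so their terms cancel.
  In the surviving terms the diagonal entries are taken at the fixed points,
  whose number has the parity of n; hence negating chi multiplies det A by (-1)^n.
*)

theory Submission
  imports Defs "HOL-Library.Disjoint_Sets"
begin

lemma orbit_closed_iff:
  assumes "permutation \<sigma>"
  shows "\<sigma> y \<in> orbit \<sigma> x \<longleftrightarrow> y \<in> orbit \<sigma> x"
proof
  assume "\<sigma> y \<in> orbit \<sigma> x"
  then have "orbit \<sigma> (\<sigma> y) = orbit \<sigma> x"
    by (rule orbit_cyclic_eq3[OF cyclic_on_orbit'[OF assms]])
  then show "y \<in> orbit \<sigma> x"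
    using permutation_orbit_step[OF assms] permutation_self_in_orbit[OF assms] by metis
qed (rule cyclic_on_inI[OF cyclic_on_orbit'[OF assms]])

lemma orbit_inv_closed_iff:
  assumes "permutation \<sigma>"
  shows "inv \<sigma> y \<in> orbit \<sigma> x \<longleftrightarrow> y \<in> orbit \<sigma> x"
  using orbit_closed_iff[OF assms, of "inv \<sigma> y" x] assms
  by (simp add: permutation_bijective bij_is_surj surj_f_inv_f)

lemma orbit_fixed_iff:
  assumes "permutation \<sigma>" "y \<in> orbit \<sigma> x"
  shows "\<sigma> y = y \<longleftrightarrow> \<sigma> x = x"
proof -
  have "orbit \<sigma> y = orbit \<sigma> x"
    by (rule orbit_cyclic_eq3[OF cyclic_on_orbit'[OF assms(1)] assms(2)])
  then show ?thesis
    using assms permutation_self_in_orbit[OF assms(1), of x]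
    by (metis orbit_eq_singleton_iff singletonD)
qed

lemma orbits_disjoint:
  assumes "permutation \<sigma>" "orbit \<sigma> x \<noteq> orbit \<sigma> y"
  shows "orbit \<sigma> x \<inter> orbit \<sigma> y = {}"
proof (rule ccontr)
  assume "orbit \<sigma> x \<inter> orbit \<sigma> y \<noteq> {}"
  then obtain z where zx: "z \<in> orbit \<sigma> x" and zy: "z \<in> orbit \<sigma> y"
    by blast
  have "orbit \<sigma> x = orbit \<sigma> z"
    using orbit_cyclic_eq3[OF cyclic_on_orbit'[OF assms(1)] zx] by simp
  also have "\<dots> = orbit \<sigma> y"
    using orbit_cyclic_eq3[OF cyclic_on_orbit'[OF assms(1)] zy] by simp
  finally show False
    using assms(2) by simp
qed

lemma bij_betw_orbit:
  assumes "permutation \<sigma>"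
  shows "bij_betw \<sigma> (orbit \<sigma> x) (orbit \<sigma> x)"
  unfolding bij_betw_def
proof
  show "inj_on \<sigma> (orbit \<sigma> x)"
    using bij_is_inj[OF permutation_bijective[OF assms]] by (rule inj_on_subset) simp
  have "y \<in> \<sigma> ` orbit \<sigma> x" if "y \<in> orbit \<sigma> x" for y
  proof
    show "y = \<sigma> (inv \<sigma> y)"
      using permutation_bijective[OF assms] by (simp add: bij_is_surj surj_f_inv_f)
    show "inv \<sigma> y \<in> orbit \<sigma> x"
      using that orbit_inv_closed_iff[OF assms] by simp
  qed
  then show "\<sigma> ` orbit \<sigma> x = orbit \<sigma> x"
    using orbit_closed_iff[OF assms] by auto
qed

lemma permutation_perm_restrict_orbit:
  assumes "permutation \<sigma>"
  shows "permutation (perm_restrict \<sigma> (orbit \<sigma> x))"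
proof -
  let ?C = "orbit \<sigma> x"
  have inv: "\<sigma> (inv \<sigma> y) = y" "inv \<sigma> (\<sigma> y) = y" for y
    using permutation_bijective[OF assms] by (simp_all add: bij_is_surj bij_is_inj surj_f_inv_f)
  have "perm_restrict \<sigma> ?C \<circ> perm_restrict (inv \<sigma>) ?C = id"
       "perm_restrict (inv \<sigma>) ?C \<circ> perm_restrict \<sigma> ?C = id"
    using orbit_closed_iff[OF assms] orbit_inv_closed_iff[OF assms] inv
    by (auto simp: fun_eq_iff perm_restrict_def)
  then have "bij (perm_restrict \<sigma> ?C)"
    using o_bij by blast
  moreover have "finite ?C"
    using finite_orbit assms permutation_self_in_orbit by metis
  then have "finite {y. perm_restrict \<sigma> ?C y \<noteq> y}"
    by (rule rev_finite_subset) (auto simp: perm_restrict_def)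
  ultimately show ?thesis
    by (simp add: permutation)
qed

definition reverse_orbit :: "('a \<Rightarrow> 'a) \<Rightarrow> 'a \<Rightarrow> 'a \<Rightarrow> 'a" where
  "reverse_orbit \<sigma> x = (\<lambda>i. if i \<in> orbit \<sigma> x then inv \<sigma> i else \<sigma> i)"

lemma reverse_orbit_eq_comp:
  fixes x :: 'a
  assumes "permutation \<sigma>"
  defines "\<rho> \<equiv> perm_restrict (inv \<sigma>) (orbit \<sigma> x)"
  shows "reverse_orbit \<sigma> x = \<sigma> \<circ> (\<rho> \<circ> \<rho>)"
proof
  fix i
  have "\<sigma> (inv \<sigma> y) = y" for y
    using permutation_bijective[OF assms(1)] by (simp add: bij_is_surj surj_f_inv_f)
  then show "reverse_orbit \<sigma> x i = (\<sigma> \<circ> (\<rho> \<circ> \<rho>)) i"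
    using orbit_inv_closed_iff[OF assms(1), of i x]
    by (simp add: reverse_orbit_def \<rho>_def perm_restrict_def)
qed

lemma
  assumes "permutation \<sigma>"
  shows permutation_reverse_orbit: "permutation (reverse_orbit \<sigma> x)"
    and sign_reverse_orbit: "sign (reverse_orbit \<sigma> x) = sign \<sigma>"
proof -
  let ?\<rho> = "perm_restrict (inv \<sigma>) (orbit \<sigma> x)"
  have "permutation ?\<rho>"
    using permutation_perm_restrict_orbit[OF permutation_inverse[OF assms], of x]
    by (simp add: orbit_inv_eq[OF assms])
  then show "permutation (reverse_orbit \<sigma> x)" "sign (reverse_orbit \<sigma> x) = sign \<sigma>"
    using assms by (simp_all add: reverse_orbit_eq_comp permutation_compose sign_compose)
qed

lemma reverse_orbit_fixed_iff:
  assumes "permutation \<sigma>"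
  shows "reverse_orbit \<sigma> x i = i \<longleftrightarrow> \<sigma> i = i"
  using permutation_bijective[OF assms] bij_inv_eq_iff[of \<sigma> i i]
  unfolding reverse_orbit_def by auto

lemma orbit_reverse_orbit:
  assumes "permutation \<sigma>"
  shows "orbit (reverse_orbit \<sigma> x) i = orbit \<sigma> i"
proof (cases "i \<in> orbit \<sigma> x")
  case True
  have "orbit \<sigma> i = orbit \<sigma> x"
    by (rule orbit_cyclic_eq3[OF cyclic_on_orbit'[OF assms] True])
  then have "orbit (reverse_orbit \<sigma> x) i = orbit (inv \<sigma>) i"
    using permutation_self_in_orbit[OF permutation_inverse[OF assms]]
    by (intro orbit_cong) (auto simp: reverse_orbit_def orbit_inv_eq[OF assms])
  then show ?thesis
    by (simp add: orbit_inv_eq[OF assms])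
next
  case False
  have "orbit \<sigma> i \<noteq> orbit \<sigma> x"
    using False permutation_self_in_orbit[OF assms] by blast
  then have "orbit \<sigma> i \<inter> orbit \<sigma> x = {}"
    by (rule orbits_disjoint[OF assms])
  then show ?thesis
    using permutation_self_in_orbit[OF assms]
    by (intro orbit_cong) (auto simp: reverse_orbit_def)
qed

lemma reverse_orbit_reverse_orbit:
  assumes "permutation \<sigma>"
  shows "reverse_orbit (reverse_orbit \<sigma> x) x = \<sigma>"
proof
  fix i
  show "reverse_orbit (reverse_orbit \<sigma> x) x i = \<sigma> i"
  proof (cases "i \<in> orbit \<sigma> x")
    case True
    have "inv (reverse_orbit \<sigma> x) i = \<sigma> i"
    proof (rule inv_f_eq)
      show "inj (reverse_orbit \<sigma> x)"
        using permutation_bijective[OF permutation_reverse_orbit[OF assms]] bij_is_inj by blast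
      show "reverse_orbit \<sigma> x (\<sigma> i) = i"
        using True orbit_closed_iff[OF assms] permutation_bijective[OF assms]
        by (simp add: reverse_orbit_def bij_is_inj)
    qed
    then show ?thesis
      using True by (simp add: reverse_orbit_def[of "reverse_orbit \<sigma> x"] orbit_reverse_orbit[OF assms])
  next
    case False
    then show ?thesis
      by (simp add: reverse_orbit_def[of "reverse_orbit \<sigma> x"] orbit_reverse_orbit[OF assms])
        (simp add: reverse_orbit_def)
  qed
qed

lemma reverse_orbit_neq:
  assumes "permutation \<sigma>" "\<sigma> x \<noteq> x" "card (orbit \<sigma> x) \<noteq> 2"
  shows "reverse_orbit \<sigma> x \<noteq> \<sigma>"
proof
  assume rev: "reverse_orbit \<sigma> x = \<sigma>"
  have "inv \<sigma> x = reverse_orbit \<sigma> x x"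
    by (simp add: reverse_orbit_def permutation_self_in_orbit[OF assms(1)])
  then have "inv \<sigma> x = \<sigma> x"
    by (simp add: rev)
  moreover have "\<sigma> (inv \<sigma> x) = x"
    using permutation_bijective[OF assms(1)] by (simp add: bij_is_surj surj_f_inv_f)
  ultimately have "(\<sigma> ^^ 2) x = x"
    by (simp add: numeral_2_eq_2)
  then have "orbit \<sigma> x = {(\<sigma> ^^ m) x | m. m < 2}"
    by (rule orbit_altdef_bounded) simp
  also have "\<dots> = {x, \<sigma> x}"
  proof
    show "{(\<sigma> ^^ m) x | m. m < 2} \<subseteq> {x, \<sigma> x}"
      by (auto simp: less_2_cases_iff)
    have "x = (\<sigma> ^^ 0) x" "\<sigma> x = (\<sigma> ^^ 1) x"
      by simp_all
    then show "{x, \<sigma> x} \<subseteq> {(\<sigma> ^^ m) x | m. m < 2}"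
      by fastforce
  qed
  finally show False
    using assms(2,3) by simp
qed

lemma prod_orbit_inv:
  fixes M :: "'a \<Rightarrow> 'a \<Rightarrow> 'b::comm_ring_1"
  assumes \<sigma>: "permutation \<sigma>" "\<sigma> x \<noteq> x"
    and M: "\<And>i j. i \<noteq> j \<Longrightarrow> M i j = F i * G j * E i j"
    and E: "\<And>i j. E j i = - E i j"
  shows "(\<Prod>i\<in>orbit \<sigma> x. M i (inv \<sigma> i)) = (-1) ^ card (orbit \<sigma> x) * (\<Prod>i\<in>orbit \<sigma> x. M i (\<sigma> i))"
proof -
  let ?C = "orbit \<sigma> x"
  have bij: "bij_betw \<sigma> ?C ?C"
    by (rule bij_betw_orbit[OF \<sigma>(1)])
  have moved: "\<sigma> j \<noteq> j" if "j \<in> ?C" for j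
    using orbit_fixed_iff[OF \<sigma>(1) that] \<sigma>(2) by simp
  have inv_\<sigma>: "inv \<sigma> (\<sigma> j) = j" for j
    using permutation_bijective[OF \<sigma>(1)] by (simp add: bij_is_inj)
  have "(\<Prod>i\<in>?C. M i (inv \<sigma> i)) = (\<Prod>j\<in>?C. M (\<sigma> j) j)"
    using prod.reindex_bij_betw[OF bij, of "\<lambda>i. M i (inv \<sigma> i)"] by (simp add: inv_\<sigma>)
  also have "\<dots> = (\<Prod>j\<in>?C. - 1 * (F (\<sigma> j) * G j * E j (\<sigma> j)))"
  proof (rule prod.cong)
    fix j
    assume "j \<in> ?C"
    then show "M (\<sigma> j) j = - 1 * (F (\<sigma> j) * G j * E j (\<sigma> j))"
      using M[of "\<sigma> j" j] E[of j "\<sigma> j"] moved by simp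
  qed simp
  also have "\<dots> = (-1) ^ card ?C * ((\<Prod>j\<in>?C. F (\<sigma> j)) * (\<Prod>j\<in>?C. G j) * (\<Prod>j\<in>?C. E j (\<sigma> j)))"
    by (simp only: prod.distrib prod_constant)
  also have "(\<Prod>j\<in>?C. F (\<sigma> j)) = (\<Prod>j\<in>?C. F j)"
    using prod.reindex_bij_betw[OF bij, of F] by simp
  also have "(\<Prod>j\<in>?C. G j) = (\<Prod>j\<in>?C. G (\<sigma> j))"
    using prod.reindex_bij_betw[OF bij, of G] by simp
  also have "(\<Prod>j\<in>?C. F j) * (\<Prod>j\<in>?C. G (\<sigma> j)) * (\<Prod>j\<in>?C. E j (\<sigma> j))
      = (\<Prod>j\<in>?C. F j * G (\<sigma> j) * E j (\<sigma> j))"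
    by (simp add: prod.distrib)
  also have "\<dots> = (\<Prod>j\<in>?C. M j (\<sigma> j))"
  proof (rule prod.cong)
    fix j
    assume "j \<in> ?C"
    then show "F j * G (\<sigma> j) * E j (\<sigma> j) = M j (\<sigma> j)"
      using M[of j "\<sigma> j"] moved by metis
  qed simp
  finally show ?thesis .
qed

lemma prod_reverse_orbit:
  fixes M :: "'n::finite \<Rightarrow> 'n \<Rightarrow> 'b::comm_ring_1"
  assumes \<sigma>: "permutation \<sigma>" "\<sigma> x \<noteq> x"
    and M: "\<And>i j. i \<noteq> j \<Longrightarrow> M i j = F i * G j * E i j"
    and E: "\<And>i j. E j i = - E i j"
  shows "(\<Prod>i\<in>UNIV. M i (reverse_orbit \<sigma> x i)) = (-1) ^ card (orbit \<sigma> x) * (\<Prod>i\<in>UNIV. M i (\<sigma> i))"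
proof -
  let ?C = "orbit \<sigma> x"
  have "(\<Prod>i\<in>UNIV. M i (reverse_orbit \<sigma> x i))
      = (\<Prod>i\<in>?C. M i (inv \<sigma> i)) * (\<Prod>i\<in>UNIV - ?C. M i (\<sigma> i))"
    by (subst prod.subset_diff[of ?C]) (simp_all add: reverse_orbit_def)
  also have "\<dots> = (-1) ^ card ?C * ((\<Prod>i\<in>?C. M i (\<sigma> i)) * (\<Prod>i\<in>UNIV - ?C. M i (\<sigma> i)))"
    using prod_orbit_inv[where F = F and G = G and E = E, OF \<sigma> M E] by (simp add: mult.assoc)
  also have "(\<Prod>i\<in>?C. M i (\<sigma> i)) * (\<Prod>i\<in>UNIV - ?C. M i (\<sigma> i)) = (\<Prod>i\<in>UNIV. M i (\<sigma> i))"
    by (subst prod.subset_diff[of ?C]) simp_all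
  finally show ?thesis .
qed

definition odd_cycle_point :: "('a \<Rightarrow> 'a) \<Rightarrow> 'a" where
  "odd_cycle_point \<sigma> = (SOME x. \<sigma> x \<noteq> x \<and> odd (card (orbit \<sigma> x)))"

lemma odd_cycle_pointD:
  assumes "\<not> all_cycles_even \<sigma>"
  shows "\<sigma> (odd_cycle_point \<sigma>) \<noteq> odd_cycle_point \<sigma>"
    and "odd (card (orbit \<sigma> (odd_cycle_point \<sigma>)))"
proof -
  have "\<exists>x. \<sigma> x \<noteq> x \<and> odd (card (orbit \<sigma> x))"
    using assms by (auto simp: all_cycles_even_def)
  then have "\<sigma> (odd_cycle_point \<sigma>) \<noteq> odd_cycle_point \<sigma> \<and> odd (card (orbit \<sigma> (odd_cycle_point \<sigma>)))"
    unfolding odd_cycle_point_def by (rule someI_ex)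
  then show "\<sigma> (odd_cycle_point \<sigma>) \<noteq> odd_cycle_point \<sigma>" "odd (card (orbit \<sigma> (odd_cycle_point \<sigma>)))"
    by simp_all
qed

lemma
  assumes "permutation \<sigma>"
  shows odd_cycle_point_reverse_orbit: "odd_cycle_point (reverse_orbit \<sigma> x) = odd_cycle_point \<sigma>"
    and all_cycles_even_reverse_orbit: "all_cycles_even (reverse_orbit \<sigma> x) \<longleftrightarrow> all_cycles_even \<sigma>"
  by (simp_all add: odd_cycle_point_def all_cycles_even_def
      reverse_orbit_fixed_iff[OF assms] orbit_reverse_orbit[OF assms])

lemma sum_sign_prod_not_all_cycles_even:
  fixes M :: "'n::finite \<Rightarrow> 'n \<Rightarrow> 'b::comm_ring_1"
  assumes M: "\<And>i j. i \<noteq> j \<Longrightarrow> M i j = F i * G j * E i j"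
    and E: "\<And>i j. E j i = - E i j"
  shows "(\<Sum>\<sigma>\<in>{\<sigma>. \<sigma> permutes UNIV \<and> \<not> all_cycles_even \<sigma>}. of_int (sign \<sigma>) * (\<Prod>i\<in>UNIV. M i (\<sigma> i))) = 0"
proof (rule sum_involution_eq_0[where h = "\<lambda>\<sigma>. reverse_orbit \<sigma> (odd_cycle_point \<sigma>)"])
  fix \<sigma> :: "'n \<Rightarrow> 'n"
  assume "\<sigma> \<in> {\<sigma>. \<sigma> permutes UNIV \<and> \<not> all_cycles_even \<sigma>}"
  then have perm: "permutation \<sigma>" and odd: "\<not> all_cycles_even \<sigma>"
    using permutes_imp_permutation[OF finite] by auto
  let ?x = "odd_cycle_point \<sigma>"
  let ?\<tau> = "reverse_orbit \<sigma> ?x"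
  have "bij ?\<tau>"
    by (rule permutation_bijective[OF permutation_reverse_orbit[OF perm]])
  then have "?\<tau> permutes UNIV"
    by (rule bij_imp_permutes) simp
  then show "?\<tau> \<in> {\<sigma>. \<sigma> permutes UNIV \<and> \<not> all_cycles_even \<sigma>}"
    using odd by (simp add: all_cycles_even_reverse_orbit[OF perm])
  show "reverse_orbit ?\<tau> (odd_cycle_point ?\<tau>) = \<sigma>"
    by (simp add: odd_cycle_point_reverse_orbit[OF perm] reverse_orbit_reverse_orbit[OF perm])
  show "?\<tau> \<noteq> \<sigma>"
  proof (rule reverse_orbit_neq[OF perm odd_cycle_pointD(1)[OF odd]])
    show "card (orbit \<sigma> ?x) \<noteq> 2"
      using odd_cycle_pointD(2)[OF odd] by auto
  qed
  show "of_int (sign ?\<tau>) * (\<Prod>i\<in>UNIV. M i (?\<tau> i)) + of_int (sign \<sigma>) * (\<Prod>i\<in>UNIV. M i (\<sigma> i)) = 0"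
    using odd_cycle_pointD[OF odd]
    by (simp add: sign_reverse_orbit[OF perm] prod_reverse_orbit[where F = F and G = G and E = E, OF perm _ M E])
qed

lemma det_eq_sum_all_cycles_even:
  fixes A :: "'b::comm_ring_1^'n::finite^'n"
  assumes "\<And>i j. i \<noteq> j \<Longrightarrow> A $ i $ j = F i * G j * E i j"
    and "\<And>i j. E j i = - E i j"
  shows "det A = (\<Sum>\<sigma>\<in>{\<sigma>. \<sigma> permutes UNIV \<and> all_cycles_even \<sigma>}. of_int (sign \<sigma>) * (\<Prod>i\<in>UNIV. A $ i $ \<sigma> i))"
proof -
  let ?t = "\<lambda>\<sigma>. of_int (sign \<sigma>) * (\<Prod>i\<in>UNIV. A $ i $ \<sigma> i)"
  let ?P = "{\<sigma>. \<sigma> permutes (UNIV :: 'n set)}"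
  have "?P \<inter> {\<sigma>. all_cycles_even \<sigma>} = {\<sigma>. \<sigma> permutes UNIV \<and> all_cycles_even \<sigma>}"
    and "?P - {\<sigma>. all_cycles_even \<sigma>} = {\<sigma>. \<sigma> permutes UNIV \<and> \<not> all_cycles_even \<sigma>}"
    by auto
  then have "det A = sum ?t {\<sigma>. \<sigma> permutes UNIV \<and> all_cycles_even \<sigma>}
      + sum ?t {\<sigma>. \<sigma> permutes UNIV \<and> \<not> all_cycles_even \<sigma>}"
    unfolding det_def using sum.Int_Diff[OF finite_permutations[OF finite], of ?t] by metis
  also have "sum ?t {\<sigma>. \<sigma> permutes UNIV \<and> \<not> all_cycles_even \<sigma>} = 0"
    by (rule sum_sign_prod_not_all_cycles_even[where M = "\<lambda>i j. A $ i $ j" and F = F and G = G and E = E,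
          OF assms])
  finally show ?thesis
    by simp
qed

lemma even_card_moved_points:
  assumes "permutation \<sigma>" "all_cycles_even \<sigma>"
  shows "even (card {i. \<sigma> i \<noteq> i})"
proof -
  let ?moved = "{i. \<sigma> i \<noteq> i}"
  let ?orbits = "(\<lambda>i. orbit \<sigma> i) ` ?moved"
  have "\<Union>?orbits = ?moved"
  proof
    show "\<Union>?orbits \<subseteq> ?moved"
      using orbit_fixed_iff[OF assms(1)] by auto
    show "?moved \<subseteq> \<Union>?orbits"
      using permutation_self_in_orbit[OF assms(1)] by auto
  qed
  moreover have "pairwise disjnt ?orbits"
    by (rule pairwise_imageI) (simp add: disjnt_def orbits_disjoint[OF assms(1)])
  ultimately have "card ?moved = sum card ?orbits"
    using card_Union_disjoint finite_orbit[OF permutation_self_in_orbit[OF assms(1)]] by fastforce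
  also have "even \<dots>"
  proof (rule dvd_sum)
    fix C
    assume "C \<in> ?orbits"
    then show "2 dvd card C"
      using assms(2) by (auto simp: all_cycles_even_def)
  qed
  finally show ?thesis .
qed

lemma neg_one_power_card_fixed_points:
  fixes \<sigma> :: "'n::finite \<Rightarrow> 'n"
  assumes "permutation \<sigma>" "all_cycles_even \<sigma>"
  shows "(-1::'a::ring_1) ^ card {i. \<sigma> i = i} = (-1) ^ CARD('n)"
proof -
  have "CARD('n) = card {i. \<sigma> i = i} + card {i. \<sigma> i \<noteq> i}"
    by (subst card_Un_disjoint[symmetric]) (auto intro: arg_cong[where f = card])
  moreover have "(-1::'a) ^ card {i. \<sigma> i \<noteq> i} = 1"
    using even_card_moved_points[OF assms] by simp
  ultimately show ?thesis
    by (simp add: power_add)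
qed

lemma Amat_offdiag:
  assumes "i \<noteq> j" "q j \<noteq> 0" "q i \<noteq> q j" "q i * q j \<noteq> 1"
  shows "Amat chi hbar q $ i $ j
    = (hbar * (1 - q i)) * (q j * (1 + q j)) * inverse ((q j - q i) * (1 - q i * q j))"
proof -
  have "q j - q i \<noteq> 0" "1 - q i * q j \<noteq> 0"
    using assms(3,4) by simp_all
  moreover have "1 - q i / q j = (q j - q i) / q j"
    using assms(2) by (simp add: field_simps)
  ultimately show ?thesis
    using assms(1,2) by (simp add: Amat_def field_simps)
qed

lemma prod_Amat_uminus:
  "(\<Prod>i\<in>UNIV. Amat (\<lambda>i. - chi i) hbar q $ i $ \<sigma> i)
    = (-1) ^ card {i. \<sigma> i = i} * (\<Prod>i\<in>UNIV. Amat chi hbar q $ i $ \<sigma> i)"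
proof -
  have "(\<Prod>i\<in>UNIV. Amat (\<lambda>i. - chi i) hbar q $ i $ \<sigma> i)
      = (\<Prod>i\<in>UNIV. (if \<sigma> i = i then -1 else 1) * Amat chi hbar q $ i $ \<sigma> i)"
    by (rule prod.cong) (auto simp: Amat_def)
  also have "\<dots> = (\<Prod>i\<in>UNIV. if \<sigma> i = i then -1 else 1) * (\<Prod>i\<in>UNIV. Amat chi hbar q $ i $ \<sigma> i)"
    by (rule prod.distrib)
  also have "(\<Prod>i\<in>UNIV. if \<sigma> i = i then -1 else 1) = (-1) ^ card {i. \<sigma> i = i}"
    by (simp add: prod.If_cases Int_def)
  finally show ?thesis .
qed

theorem mainTheorem16:
  fixes chi :: "'n::finite \<Rightarrow> 'a::field" and hbar :: 'a and q :: "'n \<Rightarrow> 'a"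
  assumes "\<And>i j. i \<noteq> j \<Longrightarrow> q j \<noteq> 0 \<and> q i \<noteq> q j \<and> q i * q j \<noteq> 1"
  shows "det (Amat chi hbar q) =
           (\<Sum>\<sigma>\<in>{\<sigma>. \<sigma> permutes (UNIV :: 'n set) \<and> all_cycles_even \<sigma>}.
              of_int (sign \<sigma>) * (\<Prod>i\<in>UNIV. Amat chi hbar q $ i $ \<sigma> i))
       \<and> det (Amat chi hbar q) = (-1) ^ CARD('n) * det (Amat (\<lambda>i. - chi i) hbar q)"
proof -
  let ?E = "\<lambda>i j. inverse ((q j - q i) * (1 - q i * q j))"
  have offdiag: "Amat c hbar q $ i $ j = (hbar * (1 - q i)) * (q j * (1 + q j)) * ?E i j"
    if "i \<noteq> j" for c i j
    using Amat_offdiag[OF that] assms[OF that] by blast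
  have antisym: "?E j i = - ?E i j" for i j
    by (simp add: algebra_simps flip: inverse_minus_eq)
  have expand: "det (Amat c hbar q) = (\<Sum>\<sigma>\<in>{\<sigma>. \<sigma> permutes UNIV \<and> all_cycles_even \<sigma>}.
      of_int (sign \<sigma>) * (\<Prod>i\<in>UNIV. Amat c hbar q $ i $ \<sigma> i))" for c
    by (rule det_eq_sum_all_cycles_even[OF offdiag antisym])
  have "det (Amat (\<lambda>i. - chi i) hbar q) = (-1) ^ CARD('n) * det (Amat chi hbar q)"
    unfolding expand sum_distrib_left
    by (intro sum.cong) (auto simp: prod_Amat_uminus neg_one_power_card_fixed_points
        permutes_imp_permutation[OF finite] mult.left_commute)
  then show ?thesis
    using expand by simp
qed

end
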